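(* Let $n\ge1$, $s\in(0,1)$. There exists $\delta\in(0,1/10)$, depending on $n$ and $s$, such that for all disjoint measurable $A,B\subset\mathbb{R}^n$ with $|A|=1$ and $|B|\le\delta$, setting $D:=\mathbb{R}^n\setminus(A\cup B)$, $$L(A,D)\ge\begin{cases}\delta & \text{if } s\in(0,1/2),\\ \delta\log(1/|B|) & \text{if } s=1/2,\\ \delta\,|B|^{1-2s} & \text{if } s\in(1/2,1).\end{cases}$$
   Context: For measurable $A,D\subset\mathbb{R}^n$, $L(A,D):=\int_A\int_D\frac{dx\,dy}{|x-y|^{n+2s}}$; $|\cdot|$ is Lebesgue measure. *)

theory Defs
  imports "HOL-Analysis.Analysis"
begin

definition Lint :: "real \<Rightarrow> (real^'n) set \<Rightarrow> (real^'n) set \<Rightarrow> ennreal" where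
  "Lint s A D = (\<integral>\<^sup>+ x. (\<integral>\<^sup>+ y. indicator A x * indicator D y *
       ennreal (1 / norm (x - y) powr (real CARD('n) + 2 * s)) \<partial>lebesgue) \<partial>lebesgue)"

text \<open>Right-hand side of the lower bound, with b = |B| (extended). Convention:
  for |B| = 0, log(1/|B|) = +infinity and |B|^(1-2s) = +infinity when s > 1/2.\<close>
definition lower_bound :: "real \<Rightarrow> real \<Rightarrow> ennreal \<Rightarrow> ennreal" where
  "lower_bound s \<delta> b =
     (if s < 1/2 then ennreal \<delta>
      else if s = 1/2 then (if b = 0 then \<infinity> else ennreal (\<delta> * ln (1 / enn2real b)))
      else (if b = 0 then \<infinity> else ennreal (\<delta> * enn2real b powr (1 - 2 * s))))"

end

theory Submission
  imports Defs
begin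

(* Write F_D(h) = |A \<inter> (D + h)|, so that L(A, D) = \<integral> |h|^(-p) F_D(h) dh with p = n + 2s.
   The function G = F_(-A) is subadditive, hence G(m h) \<le> m G(h), and since
   G(h) = |A| - |A \<inter> (A + h)| with |A| = 1, its integral over any set S is at least |S| - 1.
   On an annulus of radius R and volume V \<ge> 2 this gives \<integral> G \<ge> V - 1, and rescaling by m
   gives \<integral> G \<ge> (V - 1) / m^(n+1) on the annulus of radius R/m. As G \<le> F_D + |B|, a quarter
   of this survives for F_D while 4 m |B| \<le> 1, and the weight |h|^(-p) \<ge> (m/R)^p turns it
   into a contribution of order m^(2s-1). Summing over the dyadic scales m = 2^k \<le> 1/(4|B|)
   gives a constant for s < 1/2, the number of scales \<approx> log(1/|B|) for s = 1/2, and the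
   last term \<approx> |B|^(1-2s) for s > 1/2. *)

lemma nn_integral_lborel_affine:
  fixes t :: "'a::euclidean_space"
  assumes [measurable]: "f \<in> borel_measurable borel" and c: "c \<noteq> 0"
  shows "(\<integral>\<^sup>+x. f x \<partial>lborel) = ennreal (\<bar>c\<bar> ^ DIM('a)) * (\<integral>\<^sup>+x. f (t + c *\<^sub>R x) \<partial>lborel)"
  by (subst lborel_affine[OF c, of t])
     (simp add: nn_integral_density nn_integral_distr nn_integral_cmult)

lemma nn_integral_lborel_translate:
  fixes h :: "'a::euclidean_space"
  assumes [measurable]: "f \<in> borel_measurable borel"
  shows "(\<integral>\<^sup>+x. f (x - h) \<partial>lborel) = (\<integral>\<^sup>+x. f x \<partial>lborel)"
  using nn_integral_lborel_affine[OF assms, of 1 "-h"] by (simp add: algebra_simps)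

lemma nn_integral_lborel_reflect:
  fixes x :: "'a::euclidean_space"
  assumes [measurable]: "f \<in> borel_measurable borel"
  shows "(\<integral>\<^sup>+h. f (x - h) \<partial>lborel) = (\<integral>\<^sup>+h. f h \<partial>lborel)"
  using nn_integral_lborel_affine[OF assms, of "-1" x] by (simp add: algebra_simps)

definition overlap :: "'a::euclidean_space set \<Rightarrow> 'a set \<Rightarrow> 'a \<Rightarrow> ennreal" where
  "overlap A D h = (\<integral>\<^sup>+x. indicator A x * indicator D (x - h) \<partial>lborel)"

lemma borel_measurable_overlap [measurable]:
  assumes [measurable]: "A \<in> sets borel" "D \<in> sets borel"
  shows "overlap A D \<in> borel_measurable borel"
  unfolding overlap_def by measurable

lemma overlap_compl_add_le:
  fixes A :: "'a::euclidean_space set"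
  assumes [measurable]: "A \<in> sets borel"
  shows "overlap A (-A) (h + k) \<le> overlap A (-A) h + overlap A (-A) k"
proof -
  have "overlap A (-A) (h + k) \<le> (\<integral>\<^sup>+x. indicator A x * indicator (-A) (x - h) +
      indicator A (x - h) * indicator (-A) (x - h - k) \<partial>lborel)"
    unfolding overlap_def
    by (rule nn_integral_mono) (auto simp: algebra_simps split: split_indicator)
  also have "\<dots> = overlap A (-A) h + (\<integral>\<^sup>+x. indicator A (x - h) * indicator (-A) (x - h - k) \<partial>lborel)"
    unfolding overlap_def by (rule nn_integral_add) measurable
  also have "(\<integral>\<^sup>+x. indicator A (x - h) * indicator (-A) (x - h - k) \<partial>lborel) = overlap A (-A) k"
    unfolding overlap_def
    using nn_integral_lborel_translate[of "\<lambda>y. indicator A y * indicator (-A) (y - k) :: ennreal" h]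
    by simp
  finally show ?thesis .
qed

lemma overlap_compl_zero [simp]: "overlap A (-A) 0 = 0"
proof -
  have "(\<lambda>x. indicator A x * indicator (-A) x) = (\<lambda>x. 0 :: ennreal)"
    by (auto split: split_indicator)
  then show ?thesis unfolding overlap_def by simp
qed

lemma overlap_compl_scaleR_le:
  fixes A :: "'a::euclidean_space set"
  assumes [measurable]: "A \<in> sets borel"
  shows "overlap A (-A) (real m *\<^sub>R h) \<le> of_nat m * overlap A (-A) h"
proof (induction m)
  case (Suc m)
  have "overlap A (-A) (real (Suc m) *\<^sub>R h) = overlap A (-A) (h + real m *\<^sub>R h)"
    by (simp add: algebra_simps)
  also have "\<dots> \<le> overlap A (-A) h + overlap A (-A) (real m *\<^sub>R h)"
    by (rule overlap_compl_add_le) simp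
  also have "\<dots> \<le> overlap A (-A) h + of_nat m * overlap A (-A) h"
    using Suc by (rule add_left_mono)
  finally show ?case by (simp add: algebra_simps)
qed simp

lemma overlap_compl_add_overlap_self:
  fixes A :: "'a::euclidean_space set"
  assumes [measurable]: "A \<in> sets borel"
  shows "overlap A (-A) h + overlap A A h = emeasure lborel A"
proof -
  have "overlap A (-A) h + overlap A A h =
      (\<integral>\<^sup>+x. indicator A x * indicator (-A) (x - h) + indicator A x * indicator A (x - h) \<partial>lborel)"
    unfolding overlap_def by (rule nn_integral_add[symmetric]) measurable
  also have "\<dots> = (\<integral>\<^sup>+x. indicator A x \<partial>lborel)"
    by (rule nn_integral_cong) (auto split: split_indicator)
  finally show ?thesis by simp
qed

lemma nn_integral_overlap_self:
  fixes A :: "'a::euclidean_space set"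
  assumes [measurable]: "A \<in> sets borel"
  shows "(\<integral>\<^sup>+h. overlap A A h \<partial>lborel) = emeasure lborel A * emeasure lborel A"
proof -
  have "(\<integral>\<^sup>+h. overlap A A h \<partial>lborel) =
      (\<integral>\<^sup>+x. (\<integral>\<^sup>+h. indicator A x * indicator A (x - h) \<partial>lborel) \<partial>lborel)"
    unfolding overlap_def by (rule lborel_pair.Fubini') measurable
  also have "\<dots> = (\<integral>\<^sup>+x. indicator A x * emeasure lborel A \<partial>lborel)"
    using nn_integral_lborel_reflect[of "indicator A :: 'a \<Rightarrow> ennreal"]
    by (intro nn_integral_cong) (simp add: nn_integral_cmult)
  also have "\<dots> = emeasure lborel A * emeasure lborel A"
    by (simp add: nn_integral_multc)
  finally show ?thesis .
qed

lemma overlap_compl_le_overlap_add: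
  fixes A :: "'a::euclidean_space set"
  assumes [measurable]: "A \<in> sets borel" "B \<in> sets borel"
  shows "overlap A (-A) h \<le> overlap A (UNIV - (A \<union> B)) h + emeasure lborel B"
proof -
  have "overlap A (-A) h \<le>
      (\<integral>\<^sup>+x. indicator A x * indicator (UNIV - (A \<union> B)) (x - h) + indicator B (x - h) \<partial>lborel)"
    unfolding overlap_def by (rule nn_integral_mono) (auto split: split_indicator)
  also have "\<dots> = overlap A (UNIV - (A \<union> B)) h + (\<integral>\<^sup>+x. indicator B (x - h) \<partial>lborel)"
    unfolding overlap_def by (rule nn_integral_add) measurable
  also have "(\<integral>\<^sup>+x. indicator B (x - h) \<partial>lborel) = emeasure lborel B"
    using nn_integral_lborel_translate[of "indicator B :: 'a \<Rightarrow> ennreal" h] by simp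
  finally show ?thesis .
qed

definition interaction :: "real \<Rightarrow> 'a::euclidean_space set \<Rightarrow> 'a set \<Rightarrow> ennreal" where
  "interaction p A D = (\<integral>\<^sup>+x. (\<integral>\<^sup>+y. indicator A x * indicator D y *
     ennreal (1 / norm (x - y) powr p) \<partial>lborel) \<partial>lborel)"

lemma interaction_eq_nn_integral_overlap:
  fixes A :: "'a::euclidean_space set"
  assumes [measurable]: "A \<in> sets borel" "D \<in> sets borel"
  shows "interaction p A D = (\<integral>\<^sup>+h. ennreal (1 / norm h powr p) * overlap A D h \<partial>lborel)"
proof -
  have "interaction p A D = (\<integral>\<^sup>+x. (\<integral>\<^sup>+h. indicator A x * indicator D (x - h) *
      ennreal (1 / norm h powr p) \<partial>lborel) \<partial>lborel)"
    unfolding interaction_def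
  proof (rule nn_integral_cong)
    fix x :: 'a
    show "(\<integral>\<^sup>+y. indicator A x * indicator D y * ennreal (1 / norm (x - y) powr p) \<partial>lborel) =
        (\<integral>\<^sup>+h. indicator A x * indicator D (x - h) * ennreal (1 / norm h powr p) \<partial>lborel)"
      using nn_integral_lborel_reflect[of "\<lambda>y. indicator A x * indicator D y *
        ennreal (1 / norm (x - y) powr p)" x] by simp
  qed
  also have "\<dots> = (\<integral>\<^sup>+h. (\<integral>\<^sup>+x. indicator A x * indicator D (x - h) *
      ennreal (1 / norm h powr p) \<partial>lborel) \<partial>lborel)"
    by (rule lborel_pair.Fubini'[symmetric]) measurable
  also have "\<dots> = (\<integral>\<^sup>+h. ennreal (1 / norm h powr p) * overlap A D h \<partial>lborel)"
    unfolding overlap_def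
    by (rule nn_integral_cong, subst nn_integral_cmult[symmetric]) (measurable, simp add: mult_ac)
  finally show ?thesis .
qed

lemma emeasure_le_nn_integral_overlap_compl:
  fixes A S :: "'a::euclidean_space set"
  assumes [measurable]: "A \<in> sets borel" "S \<in> sets borel" and A: "emeasure lborel A = 1"
  shows "emeasure lborel S \<le> (\<integral>\<^sup>+h. overlap A (-A) h * indicator S h \<partial>lborel) + 1"
proof -
  have "emeasure lborel S = (\<integral>\<^sup>+h. overlap A (-A) h * indicator S h + overlap A A h * indicator S h \<partial>lborel)"
    using overlap_compl_add_overlap_self[of A] A
    by (simp flip: distrib_right nn_integral_indicator)
  also have "\<dots> = (\<integral>\<^sup>+h. overlap A (-A) h * indicator S h \<partial>lborel) +
      (\<integral>\<^sup>+h. overlap A A h * indicator S h \<partial>lborel)"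
    by (rule nn_integral_add) measurable
  also have "(\<integral>\<^sup>+h. overlap A A h * indicator S h \<partial>lborel) \<le> (\<integral>\<^sup>+h. overlap A A h \<partial>lborel)"
    by (rule nn_integral_mono) (auto split: split_indicator)
  also have "\<dots> = 1"
    using nn_integral_overlap_self[of A] A by simp
  finally show ?thesis by (simp add: add_left_mono)
qed

lemma nn_integral_overlap_compl_dilate_le:
  fixes A S :: "'a::euclidean_space set"
  assumes [measurable]: "A \<in> sets borel" "S \<in> sets borel" and m: "m > 0"
  shows "(\<integral>\<^sup>+h. overlap A (-A) h * indicator S h \<partial>lborel) \<le>
    ennreal (real m ^ (DIM('a) + 1)) * (\<integral>\<^sup>+x. overlap A (-A) x * indicator S (real m *\<^sub>R x) \<partial>lborel)"
proof -
  have "(\<integral>\<^sup>+h. overlap A (-A) h * indicator S h \<partial>lborel) = ennreal (real m ^ DIM('a)) *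
      (\<integral>\<^sup>+x. overlap A (-A) (real m *\<^sub>R x) * indicator S (real m *\<^sub>R x) \<partial>lborel)"
    using nn_integral_lborel_affine[of "\<lambda>h. overlap A (-A) h * indicator S h" "real m" 0] m by simp
  also have "\<dots> \<le> ennreal (real m ^ DIM('a)) *
      (\<integral>\<^sup>+x. of_nat m * (overlap A (-A) x * indicator S (real m *\<^sub>R x)) \<partial>lborel)"
    by (intro mult_left_mono nn_integral_mono)
       (auto simp: mult.assoc[symmetric] intro!: mult_right_mono overlap_compl_scaleR_le)
  also have "\<dots> = ennreal (real m ^ (DIM('a) + 1)) *
      (\<integral>\<^sup>+x. overlap A (-A) x * indicator S (real m *\<^sub>R x) \<partial>lborel)"
    by (simp add: nn_integral_cmult ennreal_of_nat_eq_real_of_nat ennreal_mult' mult_ac)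
  finally show ?thesis .
qed

definition annulus :: "real \<Rightarrow> 'a::euclidean_space set" where
  "annulus r = cball 0 r - cball 0 (r / 2)"

lemma sets_annulus [measurable]: "annulus r \<in> sets borel"
  unfolding annulus_def by measurable

lemma emeasure_annulus:
  assumes "r \<ge> 0"
  shows "emeasure lborel (annulus r :: 'a::euclidean_space set) =
    ennreal (unit_ball_vol DIM('a) * (1 - 1 / 2 ^ DIM('a)) * r ^ DIM('a))"
proof -
  have "emeasure lborel (annulus r :: 'a set) =
      emeasure lborel (cball 0 r :: 'a set) - emeasure lborel (cball 0 (r / 2) :: 'a set)"
    unfolding annulus_def using assms
    by (intro emeasure_Diff) (auto simp: emeasure_cball)
  also have "\<dots> = ennreal (unit_ball_vol DIM('a) * r ^ DIM('a) -
      unit_ball_vol DIM('a) * (r / 2) ^ DIM('a))"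
    using assms by (simp add: emeasure_cball ennreal_minus power_mono)
  finally show ?thesis by (simp add: power_divide algebra_simps)
qed

lemma indicator_annulus_scaleR:
  assumes "c > 0"
  shows "indicator (annulus r) (c *\<^sub>R x) = (indicator (annulus (r / c)) x :: ennreal)"
  using assms unfolding annulus_def by (auto split: split_indicator simp: field_simps)

lemma disjoint_family_annulus_dyadic:
  assumes "r > 0"
  shows "disjoint_family (\<lambda>k::nat. annulus (r / 2 ^ k) :: 'a::euclidean_space set)"
proof -
  have "annulus (r / 2 ^ k) \<inter> annulus (r / 2 ^ l) = ({} :: 'a set)" if "k < l" for k l :: nat
  proof -
    have "(2::real) ^ Suc k \<le> 2 ^ l" using that by (intro power_increasing) auto
    then have "r / 2 ^ l \<le> (r / 2 ^ k) / 2" using assms by (simp add: field_simps)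
    then show ?thesis unfolding annulus_def by auto
  qed
  then show ?thesis
    unfolding disjoint_family_on_def by (metis Int_commute linorder_neqE_nat)
qed

lemma inverse_powr_norm_ge_on_annulus:
  assumes "h \<in> annulus r" "p \<ge> 0"
  shows "1 / r powr p \<le> 1 / norm h powr p"
proof -
  from assms have h: "norm h \<le> r" "r / 2 < norm h" by (auto simp: annulus_def)
  then have "norm h > 0" using norm_ge_zero[of h] by linarith
  then show ?thesis
    using h assms by (intro divide_left_mono powr_mono2 mult_pos_pos) auto
qed

lemma ennreal_minus_le_of_le_add:
  assumes "ennreal a \<le> X + ennreal c" "0 \<le> c"
  shows "ennreal (a - c) \<le> X"
proof (cases X)
  case (real x)
  with assms have "a \<le> x + c" by (simp flip: ennreal_plus)
  with real show ?thesis by (auto intro!: ennreal_leI)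
qed simp

lemma ennreal_divide_le_of_le_mult:
  assumes "ennreal a \<le> ennreal M * X" "M > 0"
  shows "ennreal (a / M) \<le> X"
proof (cases X)
  case (real x)
  with assms have "a \<le> M * x" by (simp flip: ennreal_mult)
  with assms real show ?thesis by (auto intro!: ennreal_leI simp: divide_le_eq mult.commute)
qed simp

lemma emeasure_annulus_le_overlap_compl_dilated:
  fixes A :: "'a::euclidean_space set"
  assumes [measurable]: "A \<in> sets borel" and A: "emeasure lborel A = 1" and m: "m > 0"
  shows "emeasure lborel (annulus r :: 'a set) \<le>
    ennreal (real m ^ (DIM('a) + 1)) *
      (\<integral>\<^sup>+h. overlap A (-A) h * indicator (annulus (r / real m)) h \<partial>lborel) + 1"
proof -
  have "emeasure lborel (annulus r :: 'a set) \<le>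
      (\<integral>\<^sup>+h. overlap A (-A) h * indicator (annulus r) h \<partial>lborel) + 1"
    using emeasure_le_nn_integral_overlap_compl[of A "annulus r"] A by simp
  also have "\<dots> \<le> ennreal (real m ^ (DIM('a) + 1)) *
      (\<integral>\<^sup>+h. overlap A (-A) h * indicator (annulus (r / real m)) h \<partial>lborel) + 1"
    using nn_integral_overlap_compl_dilate_le[of A "annulus r" m] m
    by (simp add: indicator_annulus_scaleR add_right_mono)
  finally show ?thesis .
qed

lemma nn_integral_overlap_annulus_ge:
  fixes A B :: "'a::euclidean_space set"
  assumes [measurable]: "A \<in> sets borel" "B \<in> sets borel"
    and A: "emeasure lborel A = 1" and B: "emeasure lborel B \<le> ennreal b" "b \<ge> 0"
    and R: "R > 0" and V: "emeasure lborel (annulus R :: 'a set) = ennreal V" "V \<ge> 2"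
    and m: "m > 0" and bm: "4 * b * real m \<le> 1"
  shows "ennreal (V / (4 * real m ^ (DIM('a) + 1))) \<le>
    (\<integral>\<^sup>+h. overlap A (UNIV - (A \<union> B)) h * indicator (annulus (R / real m)) h \<partial>lborel)"
    (is "_ \<le> ?X")
proof -
  let ?S = "annulus (R / real m) :: 'a set" and ?n = "DIM('a)"
  let ?G = "overlap A (-A)"
  have "ennreal V = ennreal (unit_ball_vol ?n * (1 - 1 / 2 ^ ?n) * R ^ ?n)"
    using V(1) R by (simp add: emeasure_annulus)
  then have "V = unit_ball_vol ?n * (1 - 1 / 2 ^ ?n) * R ^ ?n"
    using V(2) R by (subst (asm) ennreal_inj) (auto intro!: mult_nonneg_nonneg)
  then have S: "emeasure lborel ?S = ennreal (V / real m ^ ?n)"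
    using R m by (simp add: emeasure_annulus power_divide)
  have "ennreal V \<le> ennreal (real m ^ (?n + 1)) * (\<integral>\<^sup>+h. ?G h * indicator ?S h \<partial>lborel) + 1"
    using emeasure_annulus_le_overlap_compl_dilated[OF assms(1) A m, of R] V(1) by simp
  also have "(\<integral>\<^sup>+h. ?G h * indicator ?S h \<partial>lborel) \<le>
      (\<integral>\<^sup>+h. overlap A (UNIV - (A \<union> B)) h * indicator ?S h + ennreal b * indicator ?S h \<partial>lborel)"
    using overlap_compl_le_overlap_add[of A B] B
    by (intro nn_integral_mono)
       (auto split: split_indicator intro: order_trans add_left_mono)
  also have "\<dots> = ?X + ennreal (b * (V / real m ^ ?n))"
    using S B(2) V(2)
    by (subst nn_integral_add) (auto simp: nn_integral_cmult ennreal_mult[symmetric])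
  also have "ennreal (real m ^ (?n + 1)) * (?X + ennreal (b * (V / real m ^ ?n))) + 1 =
      ennreal (real m ^ (?n + 1)) * ?X + ennreal (b * V * real m + 1)"
    using m B(2) V(2)
    by (simp add: distrib_left ennreal_mult[symmetric] ennreal_plus[symmetric] add.assoc mult_ac)
  finally have "ennreal V \<le> ennreal (real m ^ (?n + 1)) * ?X + ennreal (b * V * real m + 1)"
    by (simp add: mult_left_mono add_right_mono)
  then have "ennreal (V - (b * V * real m + 1)) \<le> ennreal (real m ^ (?n + 1)) * ?X"
    by (rule ennreal_minus_le_of_le_add) (use B(2) V(2) in simp)
  moreover have "V / 4 \<le> V - (b * V * real m + 1)"
  proof -
    have "b * V * real m = V * (b * real m)" by (simp add: mult_ac)
    also have "\<dots> \<le> V * (1 / 4)" using bm V(2) by (intro mult_left_mono) auto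
    finally show ?thesis using V(2) by linarith
  qed
  ultimately have "ennreal (V / 4) \<le> ennreal (real m ^ (?n + 1)) * ?X"
    by (meson ennreal_leI order_trans)
  then show ?thesis
    using m by (auto dest: ennreal_divide_le_of_le_mult simp: field_simps)
qed

lemma nn_integral_annulus_kernel_ge:
  assumes [measurable]: "f \<in> borel_measurable borel" and "p \<ge> 0"
  shows "ennreal (1 / r powr p) * (\<integral>\<^sup>+h. f h * indicator (annulus r) h \<partial>lborel) \<le>
    (\<integral>\<^sup>+h. ennreal (1 / norm h powr p) * f h * indicator (annulus r) h \<partial>lborel)"
proof -
  have "ennreal (1 / r powr p) * f h * indicator (annulus r) h \<le>
      ennreal (1 / norm h powr p) * f h * indicator (annulus r) h" for h :: 'a
    using inverse_powr_norm_ge_on_annulus[of h r p] assms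
    by (auto intro!: mult_right_mono ennreal_leI split: split_indicator)
  then show ?thesis
    by (subst nn_integral_cmult[symmetric]) (auto simp: mult.assoc intro!: nn_integral_mono)
qed

lemma interaction_ge_dyadic_sum:
  fixes A B :: "'a::euclidean_space set"
  assumes [measurable]: "A \<in> sets borel" "B \<in> sets borel"
    and A: "emeasure lborel A = 1" and B: "emeasure lborel B \<le> ennreal b" "b \<ge> 0"
    and R: "R > 0" and V: "emeasure lborel (annulus R :: 'a set) = ennreal V" "V \<ge> 2"
    and p: "p \<ge> 0" and N: "\<And>k. k < N \<Longrightarrow> 4 * b * 2 ^ k \<le> 1"
  shows "(\<Sum>k<N. ennreal (V / (4 * R powr p) * (2 ^ k) powr (p - DIM('a) - 1))) \<le>
    interaction p A (UNIV - (A \<union> B))"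
proof -
  let ?f = "\<lambda>h. ennreal (1 / norm h powr p) * overlap A (UNIV - (A \<union> B)) h"
  have "ennreal (V / (4 * R powr p) * (2 ^ k) powr (p - DIM('a) - 1)) \<le>
      (\<integral>\<^sup>+h. ?f h * indicator (annulus (R / 2 ^ k)) h \<partial>lborel)" if "k < N" for k
  proof -
    define M :: real where "M = 2 ^ k"
    have M0: "M > 0" by (simp add: M_def)
    have M: "M > 0" "M ^ (DIM('a) + 1) = M powr (real DIM('a) + 1)"
      using M0 powr_realpow[OF M0, of "DIM('a) + 1"] by (simp_all add: add.commute)
    have scale: "V / (4 * R powr p) * M powr (p - DIM('a) - 1) =
        1 / (R / M) powr p * (V / (4 * M ^ (DIM('a) + 1)))"
      using M R by (simp add: powr_divide powr_diff field_simps)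
    have "ennreal (V / (4 * R powr p) * M powr (p - DIM('a) - 1)) =
        ennreal (1 / (R / M) powr p) * ennreal (V / (4 * M ^ (DIM('a) + 1)))"
      unfolding scale using M0 V(2) by (intro ennreal_mult) auto
    also have "\<dots> \<le> ennreal (1 / (R / M) powr p) *
        (\<integral>\<^sup>+h. overlap A (UNIV - (A \<union> B)) h * indicator (annulus (R / M)) h \<partial>lborel)"
      using nn_integral_overlap_annulus_ge[OF assms(1-7), of "2 ^ k"] N[OF that] V(2)
      by (intro mult_left_mono) (auto simp: M_def)
    also have "\<dots> \<le> (\<integral>\<^sup>+h. ?f h * indicator (annulus (R / M)) h \<partial>lborel)"
      using nn_integral_annulus_kernel_ge[of "overlap A (UNIV - (A \<union> B))" p] p by simp
    finally show ?thesis unfolding M_def .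
  qed
  then have "(\<Sum>k<N. ennreal (V / (4 * R powr p) * (2 ^ k) powr (p - DIM('a) - 1))) \<le>
      (\<Sum>k<N. \<integral>\<^sup>+h. ?f h * indicator (annulus (R / 2 ^ k)) h \<partial>lborel)"
    by (intro sum_mono) simp
  also have "\<dots> \<le> (\<Sum>k. \<integral>\<^sup>+h. ?f h * indicator (annulus (R / 2 ^ k)) h \<partial>lborel)"
    by (rule sum_le_suminf) auto
  also have "\<dots> = (\<integral>\<^sup>+h \<in> (\<Union>k. annulus (R / 2 ^ k)). ?f h \<partial>lborel)"
    using disjoint_family_annulus_dyadic[OF R]
    by (intro nn_integral_disjoint_family[symmetric]) auto
  also have "\<dots> \<le> (\<integral>\<^sup>+h. ?f h \<partial>lborel)"
    by (rule nn_integral_mono) (auto split: split_indicator)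
  also have "\<dots> = interaction p A (UNIV - (A \<union> B))"
    by (rule interaction_eq_nn_integral_overlap[symmetric]) auto
  finally show ?thesis .
qed

lemma dyadic_scale_exists:
  fixes b :: real
  assumes "0 < b" "b \<le> 1 / 4"
  obtains N :: nat where "N \<ge> 1" "\<And>k. k < N \<Longrightarrow> 4 * b * 2 ^ k \<le> 1" "1 / (4 * b) < 2 ^ N"
proof -
  define N where "N = (LEAST N. 1 / (4 * b) < (2::real) ^ N)"
  obtain N0 where "1 / (4 * b) < (2::real) ^ N0" using real_arch_pow[of 2] by auto
  then have N: "1 / (4 * b) < 2 ^ N" unfolding N_def by (rule LeastI)
  have "4 * b * 2 ^ k \<le> 1" if "k < N" for k
    using not_less_Least[OF that[unfolded N_def]] assms by (simp add: field_simps)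
  moreover have "N \<ge> 1" using N assms by (cases N) (auto simp: field_simps)
  ultimately show ?thesis using N that by blast
qed

lemma dyadic_sum_unbounded:
  fixes L :: ennreal
  assumes "1 / 2 \<le> s" "c > 0" and L: "\<And>N. (\<Sum>k<N. ennreal (c * (2 ^ k) powr (2 * s - 1))) \<le> L"
  shows "L = \<infinity>"
proof (rule ccontr)
  assume "L \<noteq> \<infinity>"
  then obtain l where l: "L = ennreal l" "l \<ge> 0" by (cases L) auto
  obtain N :: nat where N: "l / c < real N" using reals_Archimedean2 by blast
  have "ennreal (real N * c) = (\<Sum>k<N. ennreal c)"
    using assms by (simp add: ennreal_of_nat_eq_real_of_nat ennreal_mult)
  also have "\<dots> \<le> (\<Sum>k<N. ennreal (c * (2 ^ k) powr (2 * s - 1)))"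
    using assms by (intro sum_mono ennreal_leI) (simp add: ge_one_powr_ge_zero)
  also have "\<dots> \<le> L" by (rule L)
  finally have "real N * c \<le> l" using l by simp
  with N \<open>c > 0\<close> show False by (simp add: field_simps)
qed

lemma dyadic_sum_ge_log:
  fixes b :: real
  assumes b: "0 < b" "b \<le> 1" and N: "N \<ge> 1" "1 / (4 * b) < 2 ^ N" and \<delta>: "0 \<le> \<delta>" "\<delta> \<le> c / 3"
  shows "ennreal (\<delta> * ln (1 / b)) \<le> (\<Sum>k<N. ennreal c)"
proof -
  have "ln (1 / b) < ln (2 ^ (N + 2))"
    using b N by (intro ln_less_cancel_iff[THEN iffD2]) (auto simp: field_simps)
  also have "\<dots> = real (N + 2) * ln 2" by (rule ln_realpow)
  also have "\<dots> \<le> real (N + 2)" using ln_2_less_1 by (simp add: mult_left_le)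
  finally have "\<delta> * ln (1 / b) \<le> (c / 3) * (3 * real N)"
    using b N \<delta> by (intro mult_mono) auto
  then show ?thesis
    using \<delta> by (simp add: ennreal_of_nat_eq_real_of_nat ennreal_mult[symmetric] mult_ac)
qed

lemma dyadic_sum_ge_powr:
  fixes b :: real
  assumes b: "0 < b" and N: "N \<ge> 1" "1 / (4 * b) < 2 ^ N" and s: "1 / 2 < s" "s < 1"
    and \<delta>: "0 \<le> \<delta>" "\<delta> \<le> c / 8"
  shows "ennreal (\<delta> * b powr (1 - 2 * s)) \<le> (\<Sum>k<N. ennreal (c * (2 ^ k) powr (2 * s - 1)))"
proof -
  have "(2::real) ^ N = 2 * 2 ^ (N - 1)" using N(1) by (cases N) auto
  then have "1 / (8 * b) \<le> 2 ^ (N - 1)" using b N(2) by (simp add: field_simps)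
  then have "(1 / (8 * b)) powr (2 * s - 1) \<le> (2 ^ (N - 1)) powr (2 * s - 1)"
    using b s by (intro powr_mono2) auto
  moreover have "(1 / (8 * b)) powr (2 * s - 1) = (8 * b) powr (- (2 * s - 1))"
    using b by (simp add: powr_divide flip: powr_minus_divide)
  then have "(1 / (8 * b)) powr (2 * s - 1) = 8 powr (1 - 2 * s) * b powr (1 - 2 * s)"
    using b by (simp add: powr_mult)
  moreover have "(1 / 8 :: real) \<le> 8 powr (1 - 2 * s)"
    using powr_mono[of "-1" "1 - 2 * s" 8] s by (simp add: powr_minus_divide)
  ultimately have "(1 / 8) * b powr (1 - 2 * s) \<le> (2 ^ (N - 1)) powr (2 * s - 1)"
    by (smt (verit) mult_right_mono powr_ge_zero)
  then have "c * ((1 / 8) * b powr (1 - 2 * s)) \<le> c * (2 ^ (N - 1)) powr (2 * s - 1)"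
    using \<delta> by (intro mult_left_mono) auto
  moreover have "\<delta> * b powr (1 - 2 * s) \<le> c / 8 * b powr (1 - 2 * s)"
    using \<delta> by (intro mult_right_mono) auto
  ultimately have "\<delta> * b powr (1 - 2 * s) \<le> c * (2 ^ (N - 1)) powr (2 * s - 1)"
    by simp
  then have "ennreal (\<delta> * b powr (1 - 2 * s)) \<le> ennreal (c * (2 ^ (N - 1)) powr (2 * s - 1))"
    by (rule ennreal_leI)
  also have "\<dots> \<le> (\<Sum>k<N. ennreal (c * (2 ^ k) powr (2 * s - 1)))"
    by (rule member_le_sum) (use N(1) in auto)
  finally show ?thesis .
qed

lemma lower_bound_le_of_dyadic_sums:
  fixes L \<beta> :: ennreal
  assumes s: "0 < s" "s < 1" and c: "c > 0"
    and \<delta>: "0 < \<delta>" "\<delta> \<le> 1 / 4" "\<delta> \<le> c / 8" and \<beta>: "\<beta> \<le> ennreal \<delta>"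
    and sums: "\<And>b N. 0 \<le> b \<Longrightarrow> \<beta> \<le> ennreal b \<Longrightarrow> (\<And>k. k < N \<Longrightarrow> 4 * b * 2 ^ k \<le> 1) \<Longrightarrow>
      (\<Sum>k<N. ennreal (c * (2 ^ k) powr (2 * s - 1))) \<le> L"
  shows "lower_bound s \<delta> \<beta> \<le> L"
proof (cases "s < 1 / 2")
  case True
  have "ennreal \<delta> \<le> ennreal c"
    using \<delta> c by (intro ennreal_leI) linarith
  also have "\<dots> \<le> L"
    using sums[of \<delta> 1] \<delta> \<beta> by simp
  finally show ?thesis
    using True by (simp add: lower_bound_def)
next
  case s_ge: False
  show ?thesis
  proof (cases "\<beta> = 0")
    case True
    moreover have "1 / 2 \<le> s" using s_ge by simp
    ultimately have "L = \<infinity>"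
      using sums[of 0] c by (intro dyadic_sum_unbounded) auto
    then show ?thesis by simp
  next
    case False
    obtain b where \<beta>_eq: "\<beta> = ennreal b" and "0 \<le> b"
      using \<beta> by (cases \<beta>) (auto simp: top_unique)
    then have b: "0 < b" "b \<le> \<delta>"
      using \<beta> False \<delta> by auto
    obtain N where N: "N \<ge> 1" "\<And>k. k < N \<Longrightarrow> 4 * b * 2 ^ k \<le> 1" "1 / (4 * b) < 2 ^ N"
      using dyadic_scale_exists[of b] b \<delta> by auto
    have S: "(\<Sum>k<N. ennreal (c * (2 ^ k) powr (2 * s - 1))) \<le> L"
      using sums[of b N] b N(2) \<beta>_eq by simp
    show ?thesis
    proof (cases "s = 1 / 2")
      case True
      have "ennreal (\<delta> * ln (1 / b)) \<le> (\<Sum>k<N. ennreal c)"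
        using b \<delta> N by (intro dyadic_sum_ge_log) auto
      also have "\<dots> \<le> L" using S True by simp
      finally show ?thesis
        using True False \<beta>_eq b by (simp add: lower_bound_def)
    next
      case False
      have "ennreal (\<delta> * b powr (1 - 2 * s)) \<le> (\<Sum>k<N. ennreal (c * (2 ^ k) powr (2 * s - 1)))"
        using b \<delta> N s s_ge False by (intro dyadic_sum_ge_powr) auto
      also note S
      finally show ?thesis
        using s_ge False \<beta>_eq b by (simp add: lower_bound_def)
    qed
  qed
qed

lemma annulus_volume_ge_two:
  obtains R V where "R > 0" "emeasure lborel (annulus R :: 'a::euclidean_space set) = ennreal V" "V \<ge> 2"
proof -
  define \<kappa> where "\<kappa> = unit_ball_vol DIM('a) * (1 - 1 / 2 ^ DIM('a))"
  define R where "R = max 1 (2 / \<kappa>)"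
  have "(1::real) / 2 ^ DIM('a) < 1" by simp
  then have \<kappa>: "\<kappa> > 0" unfolding \<kappa>_def by simp
  have "R ^ 1 \<le> R ^ DIM('a)" unfolding R_def by (intro power_increasing) (auto simp: Suc_le_eq)
  then have "2 / \<kappa> \<le> R ^ DIM('a)" unfolding R_def by simp
  then have "2 \<le> \<kappa> * R ^ DIM('a)" using \<kappa> by (simp add: field_simps)
  moreover have "R > 0" unfolding R_def by simp
  ultimately show ?thesis
    using that[of R "\<kappa> * R ^ DIM('a)"] by (simp add: emeasure_annulus \<kappa>_def)
qed

text \<open>\<open>A\<close> is replaced by a Borel subset of full measure and \<open>A \<union> B\<close> by a Borel superset of
  equal measure; this only shrinks \<open>A\<close> and the complement \<open>D\<close>.\<close>

lemma Lint_ge_interaction_of_borel_parts: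
  fixes A B :: "(real^'n) set"
  assumes A: "A \<in> sets lebesgue" and B: "B \<in> sets lebesgue" and AB: "A \<inter> B = {}"
    and A1: "emeasure lebesgue A = 1"
  obtains A0 B0 :: "(real^'n) set" where "A0 \<in> sets borel" "B0 \<in> sets borel"
    "emeasure lborel A0 = 1" "emeasure lborel B0 = emeasure lebesgue B"
    "interaction (real CARD('n) + 2 * s) A0 (UNIV - (A0 \<union> B0)) \<le> Lint s A (UNIV - (A \<union> B))"
proof -
  define A0 where "A0 = main_part lborel A"
  have A0: "A0 \<in> sets lborel" "A0 \<subseteq> A" "emeasure lborel A0 = 1"
    unfolding A0_def using main_part_sets[OF A] main_part_null_part_Un[OF A]
      emeasure_completion[OF A] A1 by auto
  obtain C where C: "C \<in> sets lborel" "A \<union> B \<subseteq> C" "emeasure lebesgue (A \<union> B) = emeasure lborel C"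
    using completion_upper[of "A \<union> B" lborel] A B by blast
  define B0 where "B0 = C - A0"
  have B0: "B0 \<in> sets lborel" and U: "A0 \<union> B0 = C"
    unfolding B0_def using C A0 by auto
  have "emeasure lborel C = emeasure lborel A0 + emeasure lborel B0"
    unfolding U[symmetric] using A0 B0 by (intro plus_emeasure[symmetric]) (auto simp: B0_def)
  moreover have "emeasure lebesgue (A \<union> B) = emeasure lebesgue A + emeasure lebesgue B"
    using A B AB by (intro plus_emeasure[symmetric]) auto
  ultimately have "1 + emeasure lborel B0 = 1 + emeasure lebesgue B"
    using C(3) A0(3) A1 by simp
  then have B0_eq: "emeasure lborel B0 = emeasure lebesgue B"
    by (subst (asm) ennreal_add_left_cancel) simp
  have "indicator A0 x * indicator (UNIV - C) y * k \<le>
      indicator A x * indicator (UNIV - (A \<union> B)) y * (k :: ennreal)" for x y k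
    using A0(2) C(2) by (intro mult_right_mono mult_mono) (auto split: split_indicator)
  then have "interaction (real CARD('n) + 2 * s) A0 (UNIV - (A0 \<union> B0)) \<le> Lint s A (UNIV - (A \<union> B))"
    unfolding interaction_def Lint_def nn_integral_completion U
    by (intro nn_integral_mono)
  with A0 B0 B0_eq show ?thesis by (intro that[of A0 B0]) auto
qed

theorem lemma4p2:
  fixes s :: real
  assumes "0 < s" and "s < 1"
  shows "\<exists>\<delta>::real. 0 < \<delta> \<and> \<delta> < 1/10 \<and>
    (\<forall>A B :: (real^'n) set.
       A \<in> sets lebesgue \<longrightarrow> B \<in> sets lebesgue \<longrightarrow> A \<inter> B = {} \<longrightarrow>
       emeasure lebesgue A = 1 \<longrightarrow> emeasure lebesgue B \<le> ennreal \<delta> \<longrightarrow>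
       Lint s A (UNIV - (A \<union> B)) \<ge> lower_bound s \<delta> (emeasure lebesgue B))"
proof -
  obtain R V where R: "R > 0" and V: "emeasure lborel (annulus R :: (real^'n) set) = ennreal V" "V \<ge> 2"
    by (rule annulus_volume_ge_two)
  define p where "p = real CARD('n) + 2 * s"
  define c where "c = V / (4 * R powr p)"
  define \<delta> where "\<delta> = min (1 / 20) (c / 8)"
  have c: "c > 0" using R V(2) by (simp add: c_def)
  then have \<delta>: "0 < \<delta>" "\<delta> < 1 / 10" "\<delta> \<le> 1 / 4" "\<delta> \<le> c / 8" by (auto simp: \<delta>_def)
  show ?thesis
  proof (intro exI[of _ \<delta>] conjI allI impI \<delta>(1,2))
    fix A B :: "(real^'n) set"
    assume hyps: "A \<in> sets lebesgue" "B \<in> sets lebesgue" "A \<inter> B = {}" "emeasure lebesgue A = 1"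
      and B: "emeasure lebesgue B \<le> ennreal \<delta>"
    obtain A0 B0 :: "(real^'n) set" where [measurable]: "A0 \<in> sets borel" "B0 \<in> sets borel"
      and A0: "emeasure lborel A0 = 1" and B0: "emeasure lborel B0 = emeasure lebesgue B"
      and L: "interaction p A0 (UNIV - (A0 \<union> B0)) \<le> Lint s A (UNIV - (A \<union> B))"
      unfolding p_def by (rule Lint_ge_interaction_of_borel_parts[where s = s, OF hyps])
    have "lower_bound s \<delta> (emeasure lborel B0) \<le> interaction p A0 (UNIV - (A0 \<union> B0))"
    proof (rule lower_bound_le_of_dyadic_sums[OF assms c \<delta>(1,3,4)])
      fix b N assume "0 \<le> b" "emeasure lborel B0 \<le> ennreal b" "\<And>k. k < N \<Longrightarrow> 4 * b * 2 ^ k \<le> 1"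
      then show "(\<Sum>k<N. ennreal (c * (2 ^ k) powr (2 * s - 1))) \<le> interaction p A0 (UNIV - (A0 \<union> B0))"
        using interaction_ge_dyadic_sum[of A0 B0 b R V p N] A0 R V assms
        by (simp add: c_def p_def)
    qed (use B B0 in simp)
    then show "lower_bound s \<delta> (emeasure lebesgue B) \<le> Lint s A (UNIV - (A \<union> B))"
      using B0 L by simp
  qed
qed

end
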